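(* Consider a finite super-modular game with player set $\mathcal V$ and binary action sets $\{\pm1\}$. Then for every configuration $x\in\mathcal X$: (i) $f^-(f^+(x))$ and $f^+(f^-(x))$ are equilibria, and they are respectively the greatest and the least equilibria that are I-reachable from $x$; (ii) $f^-(g^+(x))$ and $f^+(g^-(x))$ are equilibria, and they are respectively the greatest and the least equilibria that are BR-reachable from $x$; (iii) if $x\in\mathcal X^*$, then $g^+(x)$ and $g^-(x)$ are equilibria, and they are respectively the greatest and the least equilibria BR-reachable from $x$. Moreover: (iv) the set of equilibria $\mathcal X^*$ is a nonempty complete lattice (for the componentwise order) and is globally I-stable; (v) $\underline x^*=f^+(g^-(-\mathbf 1))=f^+(-\mathbf 1)$ and $\overline x^*=f^-(g^+(+\mathbf 1))=f^-(+\mathbf 1)$ are respectively the least and the greatest equilibria; (vi) for any two equilibria $x,y\in\mathcal X^*$, $f^+(x\vee y)$ is the least equilibrium that is $\ge$ both $x$ and $y$, and $f^-(x\wedge y)$ is the greatest equilibrium that is $\le$ both $x$ and $y$; (vii) if $\underline x^*=\overline x^*=x^*$, then $\mathcal X^*=\{x^*\}$ is globally BR-stable.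
   Context: Game: finite player set $\mathcal V$, each player has action set $\{-1,+1\}$, configurations $x\in\mathcal X=\{-1,+1\}^{\mathcal V}$, utilities $u_i:\mathcal X\to\mathbb R$; write $u_i(x)=u_i(x_i,x_{-i})$. Best response: $\mathcal B_i(x_{-i})=\arg\max_{x_i\in\{\pm1\}}u_i(x_i,x_{-i})$. An equilibrium is $x^*$ with $x_i^*\in\mathcal B_i(x^*_{-i})$ for all $i$; $\mathcal X^*$ is the set of equilibria. The game is super-modular if for every $i$, $u_i(1,x_{-i})-u_i(-1,x_{-i})\ge u_i(1,y_{-i})-u_i(-1,y_{-i})$ whenever $x_{-i}\ge y_{-i}$ (componentwise order). $x\vee y$, $x\wedge y$ are the entrywise max and min; $\bigvee L,\bigwedge L$ those of a set. Paths: a length-$l$ admissible path from $x$ to $y$ is $(x^{(0)},\dots,x^{(l)})$ with $x^{(0)}=x$, $x^{(l)}=y$, and for each $k=1,\dots,l$ a player $i_k$ with $x^{(k)}_{-i_k}=x^{(k-1)}_{-i_k}$ and $x^{(k)}_{i_k}\ne x^{(k-1)}_{i_k}$ (length $0$ allowed). It is an I-path if $u_{i_k}(x^{(k)})>u_{i_k}(x^{(k-1)})$ for all $k$, a BR-path if $u_{i_k}(x^{(k)})\ge u_{i_k}(x^{(k-1)})$ for all $k$; monotone if $x^{(0)}\lneq x^{(1)}\lneq\cdots\lneq x^{(l)}$, anti-monotone if $x^{(0)}\gneq\cdots\gneq x^{(l)}$ (where $x\lneq y$ means $x\le y$, $x\neq y$). For $\alpha\in\{\mathrm{I},\mathrm{BR}\}$: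 $\mathcal Y\subseteq\mathcal X$ is $\alpha$-reachable from $x$ if there is an $\alpha$-path from $x$ to some $y\in\mathcal Y$; globally $\alpha$-reachable if $\alpha$-reachable from every $x$; $\alpha$-invariant if there is no $\alpha$-path from any $y\in\mathcal Y$ to any $z\notin\mathcal Y$; globally $\alpha$-stable if globally $\alpha$-reachable and $\alpha$-invariant. A configuration $y$ is I-reachable (BR-reachable) from $x$ if $\{y\}$ is. Maps: $f^+(x)=\bigvee\{y: y$ reachable from $x$ by a monotone I-path$\}$, $f^-(x)=\bigwedge\{y: y$ reachable from $x$ by an anti-monotone I-path$\}$, $g^+(x)=\bigvee\{y: y$ reachable from $x$ by a monotone BR-path$\}$, $g^-(x)=\bigwedge\{y: y$ reachable from $x$ by an anti-monotone BR-path$\}$. *)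

theory Defs
  imports Complex_Main
begin

text \<open>The order on configurations
 is the pointwise order on functions; x \<squnion> y (sup) is the entrywise max.\<close>

type_synonym 'v cfg = "'v \<Rightarrow> int"
type_synonym 'v game = "'v \<Rightarrow> 'v cfg \<Rightarrow> real"

definition is_cfg :: "'v cfg \<Rightarrow> bool" where
  "is_cfg x \<longleftrightarrow> (\<forall>i. x i \<in> {-1, 1})"

definition supermodular :: "'v game \<Rightarrow> bool" where
  "supermodular u \<longleftrightarrow>
     (\<forall>i x y. is_cfg x \<and> is_cfg y \<and> (\<forall>j. j \<noteq> i \<longrightarrow> y j \<le> x j) \<longrightarrow>
        u i (x(i := 1)) - u i (x(i := -1)) \<ge> u i (y(i := 1)) - u i (y(i := -1)))"

definition best_resp :: "'v game \<Rightarrow> 'v \<Rightarrow> 'v cfg \<Rightarrow> int set" where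
  "best_resp u i x = {a \<in> {-1, 1}. \<forall>b \<in> {-1, 1}. u i (x(i := b)) \<le> u i (x(i := a))}"

definition equilibria :: "'v game \<Rightarrow> 'v cfg set" where
  "equilibria u = {x. is_cfg x \<and> (\<forall>i. x i \<in> best_resp u i x)}"

definition adm_step :: "'v \<Rightarrow> 'v cfg \<Rightarrow> 'v cfg \<Rightarrow> bool" where
  "adm_step i x y \<longleftrightarrow> is_cfg x \<and> is_cfg y \<and> y i \<noteq> x i \<and> (\<forall>j. j \<noteq> i \<longrightarrow> y j = x j)"

definition I_step :: "'v game \<Rightarrow> 'v cfg \<Rightarrow> 'v cfg \<Rightarrow> bool" where
  "I_step u x y \<longleftrightarrow> (\<exists>i. adm_step i x y \<and> u i y > u i x)"

definition BR_step :: "'v game \<Rightarrow> 'v cfg \<Rightarrow> 'v cfg \<Rightarrow> bool" where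
  "BR_step u x y \<longleftrightarrow> (\<exists>i. adm_step i x y \<and> u i y \<ge> u i x)"

definition I_reach :: "'v game \<Rightarrow> 'v cfg \<Rightarrow> 'v cfg \<Rightarrow> bool" where
  "I_reach u = (I_step u)\<^sup>*\<^sup>*"

definition BR_reach :: "'v game \<Rightarrow> 'v cfg \<Rightarrow> 'v cfg \<Rightarrow> bool" where
  "BR_reach u = (BR_step u)\<^sup>*\<^sup>*"

definition I_reach_mono :: "'v game \<Rightarrow> 'v cfg \<Rightarrow> 'v cfg \<Rightarrow> bool" where
  "I_reach_mono u = (\<lambda>x y. I_step u x y \<and> x < y)\<^sup>*\<^sup>*"

definition I_reach_anti :: "'v game \<Rightarrow> 'v cfg \<Rightarrow> 'v cfg \<Rightarrow> bool" where
  "I_reach_anti u = (\<lambda>x y. I_step u x y \<and> y < x)\<^sup>*\<^sup>*"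

definition BR_reach_mono :: "'v game \<Rightarrow> 'v cfg \<Rightarrow> 'v cfg \<Rightarrow> bool" where
  "BR_reach_mono u = (\<lambda>x y. BR_step u x y \<and> x < y)\<^sup>*\<^sup>*"

definition BR_reach_anti :: "'v game \<Rightarrow> 'v cfg \<Rightarrow> 'v cfg \<Rightarrow> bool" where
  "BR_reach_anti u = (\<lambda>x y. BR_step u x y \<and> y < x)\<^sup>*\<^sup>*"

text \<open>Entrywise max / min of a (finite, nonempty) set of configurations.\<close>
definition bigjoin :: "'v cfg set \<Rightarrow> 'v cfg" where
  "bigjoin L = (\<lambda>i. Max ((\<lambda>y. y i) ` L))"

definition bigmeet :: "'v cfg set \<Rightarrow> 'v cfg" where
  "bigmeet L = (\<lambda>i. Min ((\<lambda>y. y i) ` L))"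

definition f_plus :: "'v game \<Rightarrow> 'v cfg \<Rightarrow> 'v cfg" where
  "f_plus u x = bigjoin {y. I_reach_mono u x y}"

definition f_minus :: "'v game \<Rightarrow> 'v cfg \<Rightarrow> 'v cfg" where
  "f_minus u x = bigmeet {y. I_reach_anti u x y}"

definition g_plus :: "'v game \<Rightarrow> 'v cfg \<Rightarrow> 'v cfg" where
  "g_plus u x = bigjoin {y. BR_reach_mono u x y}"

definition g_minus :: "'v game \<Rightarrow> 'v cfg \<Rightarrow> 'v cfg" where
  "g_minus u x = bigmeet {y. BR_reach_anti u x y}"

definition is_greatest :: "'v cfg set \<Rightarrow> 'v cfg \<Rightarrow> bool" where
  "is_greatest S z \<longleftrightarrow> z \<in> S \<and> (\<forall>w \<in> S. w \<le> z)"

definition is_least :: "'v cfg set \<Rightarrow> 'v cfg \<Rightarrow> bool" where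
  "is_least S z \<longleftrightarrow> z \<in> S \<and> (\<forall>w \<in> S. z \<le> w)"

definition complete_lattice_on :: "'v cfg set \<Rightarrow> bool" where
  "complete_lattice_on S \<longleftrightarrow>
     (\<forall>A \<subseteq> S. (\<exists>s. is_least {t \<in> S. \<forall>a \<in> A. a \<le> t} s)
              \<and> (\<exists>s. is_greatest {t \<in> S. \<forall>a \<in> A. t \<le> a} s))"

definition globally_reachable :: "('v cfg \<Rightarrow> 'v cfg \<Rightarrow> bool) \<Rightarrow> 'v cfg set \<Rightarrow> bool" where
  "globally_reachable R Y \<longleftrightarrow> (\<forall>x. is_cfg x \<longrightarrow> (\<exists>y \<in> Y. R x y))"

definition invariant :: "('v cfg \<Rightarrow> 'v cfg \<Rightarrow> bool) \<Rightarrow> 'v cfg set \<Rightarrow> bool" where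
  "invariant R Y \<longleftrightarrow> (\<forall>y \<in> Y. \<forall>z. R y z \<longrightarrow> z \<in> Y)"

definition globally_stable :: "('v cfg \<Rightarrow> 'v cfg \<Rightarrow> bool) \<Rightarrow> 'v cfg set \<Rightarrow> bool" where
  "globally_stable R Y \<longleftrightarrow> globally_reachable R Y \<and> invariant R Y"

end

theory Submission
  imports Defs "HOL-Library.Function_Algebras"
begin

text \<open>
  Supermodularity says that the marginal gain of switching a player from \<open>-1\<close> to \<open>+1\<close> is
  monotone in the configuration. Hence a profitable upward switch stays profitable at every
  larger configuration, so the configurations reachable from \<open>x\<close> by monotone I-paths
  (BR-paths) are closed under joins: \<open>f\<^sup>+(x)\<close> and \<open>g\<^sup>+(x)\<close> are themselves reachable, and they
  are the least configurations above \<open>x\<close> at which no player gains by switching up. Every I-step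
  (BR-step) is either such an upward step or goes down, so \<open>f\<^sup>+\<close> (\<open>g\<^sup>+\<close>) can only decrease
  along I-paths (BR-paths). Negating all actions preserves supermodularity and exchanges up
  and down, which gives the dual statements for \<open>f\<^sup>-\<close> and \<open>g\<^sup>-\<close>. Together these show that
  \<open>f\<^sup>+(f\<^sup>-(x))\<close> lies below every equilibrium I-reachable from \<open>x\<close>, and similarly for the other
  compositions. For the lattice structure, the pointwise join of a set of equilibria is a
  configuration at which nobody gains by switching down, and \<open>f\<^sup>+\<close> maps it to the least
  equilibrium above it.
\<close>

section \<open>Configurations and marginal gains\<close>

definition marginal_gain :: "'v game \<Rightarrow> 'v \<Rightarrow> 'v cfg \<Rightarrow> real" where
  "marginal_gain u i x = u i (x(i := 1)) - u i (x(i := -1))"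

definition up_stable :: "'v game \<Rightarrow> 'v cfg \<Rightarrow> bool" where
  "up_stable u x \<longleftrightarrow> (\<forall>i. x i = -1 \<longrightarrow> marginal_gain u i x \<le> 0)"

definition down_stable :: "'v game \<Rightarrow> 'v cfg \<Rightarrow> bool" where
  "down_stable u x \<longleftrightarrow> (\<forall>i. x i = 1 \<longrightarrow> 0 \<le> marginal_gain u i x)"

lemma is_cfg_cases: "is_cfg x \<Longrightarrow> x i = -1 \<or> x i = 1"
  by (auto simp: is_cfg_def)

lemma is_cfg_fun_upd [simp]: "is_cfg x \<Longrightarrow> a \<in> {-1, 1} \<Longrightarrow> is_cfg (x(i := a))"
  by (auto simp: is_cfg_def)

lemma is_cfg_uminus [simp]: "is_cfg (- x) \<longleftrightarrow> is_cfg x"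
proof -
  have "- a \<in> {-1, 1} \<longleftrightarrow> a \<in> {-1, 1}" for a :: int
    by auto
  then show ?thesis by (simp add: is_cfg_def)
qed

lemma is_cfg_sup: "is_cfg x \<Longrightarrow> is_cfg y \<Longrightarrow> is_cfg (sup x y)"
  by (auto simp: is_cfg_def sup_max max_def)

lemma is_cfg_bounds:
  assumes "is_cfg x"
  shows "(\<lambda>_. -1) \<le> x \<and> x \<le> (\<lambda>_. 1)"
proof -
  have "-1 \<le> x i \<and> x i \<le> 1" for i
    using is_cfg_cases[OF assms, of i] by auto
  then show ?thesis by (simp add: le_fun_def)
qed

lemma finite_cfgs: "finite {x :: ('v::finite) cfg. is_cfg x}"
proof -
  have "finite {f :: 'v cfg. \<forall>i. (i \<in> UNIV \<longrightarrow> f i \<in> {-1, 1}) \<and> (i \<notin> UNIV \<longrightarrow> f i = 0)}"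
    by (rule finite_set_of_finite_funs) auto
  then show ?thesis by (simp add: is_cfg_def)
qed

lemma finite_rtranclp_cfg:
  assumes "\<And>a b. R a b \<Longrightarrow> is_cfg b"
  shows "finite {y :: ('v::finite) cfg. R\<^sup>*\<^sup>* x y}"
proof (rule finite_subset[OF _ finite_insert[THEN iffD2, OF finite_cfgs]])
  show "{y. R\<^sup>*\<^sup>* x y} \<subseteq> insert x {y. is_cfg y}"
    by (auto elim: rtranclp.cases dest: assms)
qed

lemma rtranclp_is_cfg: "R\<^sup>*\<^sup>* x y \<Longrightarrow> (\<And>a b. R a b \<Longrightarrow> is_cfg b) \<Longrightarrow> is_cfg x \<Longrightarrow> is_cfg y"
  by (induction rule: rtranclp_induct) auto

lemma marginal_gain_fun_upd [simp]: "marginal_gain u i (x(i := a)) = marginal_gain u i x"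
  by (simp add: marginal_gain_def)

lemma marginal_gain_at_minus: "x i = -1 \<Longrightarrow> marginal_gain u i x = u i (x(i := 1)) - u i x"
  unfolding marginal_gain_def by (metis fun_upd_triv)

lemma supermodular_iff:
  "supermodular u \<longleftrightarrow> (\<forall>i x y. is_cfg x \<and> is_cfg y \<and> (\<forall>j. j \<noteq> i \<longrightarrow> y j \<le> x j)
      \<longrightarrow> marginal_gain u i y \<le> marginal_gain u i x)"
  by (simp add: supermodular_def marginal_gain_def)

lemma marginal_gain_mono:
  assumes "supermodular u" "is_cfg x" "is_cfg y" "y \<le> x"
  shows "marginal_gain u i y \<le> marginal_gain u i x"
  using assms unfolding supermodular_iff le_fun_def by blast

lemma best_resp_iff:
  "a \<in> best_resp u i x \<longleftrightarrow> a = -1 \<and> marginal_gain u i x \<le> 0 \<or> a = 1 \<and> 0 \<le> marginal_gain u i x"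
  by (auto simp: best_resp_def marginal_gain_def)

lemma equilibria_iff: "x \<in> equilibria u \<longleftrightarrow> is_cfg x \<and> up_stable u x \<and> down_stable u x"
  unfolding equilibria_def up_stable_def down_stable_def best_resp_iff
  using is_cfg_cases[of x] by force

lemma adm_step_iff:
  "adm_step i x y \<longleftrightarrow> is_cfg x \<and> (x i = -1 \<and> y = x(i := 1) \<or> x i = 1 \<and> y = x(i := -1))"
proof
  assume step: "adm_step i x y"
  then have "x i = -1 \<and> y i = 1 \<or> x i = 1 \<and> y i = -1"
    using is_cfg_cases[of x i] is_cfg_cases[of y i] by (auto simp: adm_step_def)
  with step show "is_cfg x \<and> (x i = -1 \<and> y = x(i := 1) \<or> x i = 1 \<and> y = x(i := -1))"
    by (auto simp: adm_step_def fun_eq_iff)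
qed (auto simp: adm_step_def)

lemma less_fun_upd_minus: "(x :: 'v cfg) i = -1 \<Longrightarrow> x < x(i := 1)"
  unfolding less_le by (auto simp: le_fun_def dest: fun_cong[of _ _ i])

lemma less_fun_upd_plus: "(x :: 'v cfg) i = 1 \<Longrightarrow> x(i := -1) < x"
  unfolding less_le by (auto simp: le_fun_def dest: fun_cong[of _ _ i])

lemma adm_step_less: "adm_step i x y \<Longrightarrow> x < y \<or> y < x"
  by (auto simp: adm_step_iff less_fun_upd_minus less_fun_upd_plus)

lemma adm_step_upward_iff: "adm_step i x y \<and> x < y \<longleftrightarrow> is_cfg x \<and> x i = -1 \<and> y = x(i := 1)"
proof -
  have "\<not> x < x(i := -1)" if "x i = 1"
    using less_fun_upd_plus[of x i, OF that] by (rule less_not_sym)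
  then show ?thesis
    by (auto simp: adm_step_iff less_fun_upd_minus)
qed

lemma equilibrium_no_I_step:
  assumes "x \<in> equilibria u"
  shows "\<not> I_step u x y"
proof
  assume "I_step u x y"
  then obtain i where step: "adm_step i x y" and gain: "u i x < u i y"
    by (auto simp: I_step_def)
  have "x(i := y i) = y" "y i \<in> {-1, 1}"
    using step by (auto simp: adm_step_def is_cfg_def fun_eq_iff)
  moreover have "x i \<in> best_resp u i x"
    using assms by (simp add: equilibria_def)
  ultimately have "u i (x(i := y i)) \<le> u i (x(i := x i))"
    unfolding best_resp_def by blast
  then have "u i y \<le> u i x"
    using \<open>x(i := y i) = y\<close> by simp
  with gain show False by simp
qed

lemma I_reach_from_equilibrium: "I_reach u x z \<Longrightarrow> x \<in> equilibria u \<Longrightarrow> z = x"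
  unfolding I_reach_def
  by (induction rule: rtranclp_induct) (auto dest: equilibrium_no_I_step)

lemma I_reach_imp_BR_reach: "I_reach u x y \<Longrightarrow> BR_reach u x y"
  unfolding I_reach_def BR_reach_def
  by (rule mono_rtranclp[rule_format]) (auto simp: I_step_def BR_step_def)

lemma BR_reach_trans: "BR_reach u x y \<Longrightarrow> BR_reach u y z \<Longrightarrow> BR_reach u x z"
  unfolding BR_reach_def by (rule rtranclp_trans)

lemma I_reach_trans: "I_reach u x y \<Longrightarrow> I_reach u y z \<Longrightarrow> I_reach u x z"
  unfolding I_reach_def by (rule rtranclp_trans)

section \<open>Monotone paths of profitable raises\<close>

lemma bigjoin_upper: "finite S \<Longrightarrow> y \<in> S \<Longrightarrow> y \<le> bigjoin S"
  by (auto simp: bigjoin_def le_fun_def)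

lemma bigjoin_sup_closed:
  assumes "finite S" "S \<noteq> {}" "\<And>a b. a \<in> S \<Longrightarrow> b \<in> S \<Longrightarrow> sup a b \<in> S"
  shows "bigjoin S \<in> S"
proof -
  have "bigjoin T \<in> S" if "finite T" "T \<noteq> {}" "T \<subseteq> S" for T
    using that
  proof (induction T rule: finite_ne_induct)
    case (singleton x)
    then show ?case by (simp add: bigjoin_def)
  next
    case (insert x T)
    have "bigjoin (insert x T) = sup x (bigjoin T)"
      using insert.hyps by (simp add: bigjoin_def fun_eq_iff sup_max)
    moreover have "sup x (bigjoin T) \<in> S"
      using insert.IH insert.prems assms(3) by blast
    ultimately show ?case by metis
  qed
  from this[OF assms(1,2) order.refl] show ?thesis .
qed

lemma bigmeet_image_uminus: "finite S \<Longrightarrow> S \<noteq> {} \<Longrightarrow> bigmeet (uminus ` S) = - bigjoin S"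
  by (simp add: bigmeet_def bigjoin_def fun_eq_iff image_image)

text \<open>
  A \<open>P\<close>-raise switches one player from \<open>-1\<close> to \<open>+1\<close> when the marginal gain satisfies \<open>P\<close>:
  \<open>P = (\<lambda>d. 0 < d)\<close> gives the monotone I-steps, \<open>P = (\<lambda>d. 0 \<le> d)\<close> the monotone BR-steps.
\<close>

definition raise_step :: "'v game \<Rightarrow> (real \<Rightarrow> bool) \<Rightarrow> 'v cfg \<Rightarrow> 'v cfg \<Rightarrow> bool" where
  "raise_step u P x y \<longleftrightarrow> is_cfg x \<and> (\<exists>i. x i = -1 \<and> y = x(i := 1) \<and> P (marginal_gain u i x))"

definition raise_top :: "'v game \<Rightarrow> (real \<Rightarrow> bool) \<Rightarrow> 'v cfg \<Rightarrow> 'v cfg" where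
  "raise_top u P x = bigjoin {y. (raise_step u P)\<^sup>*\<^sup>* x y}"

lemma raise_step_le: "raise_step u P x y \<Longrightarrow> is_cfg y \<and> x \<le> y"
  by (auto simp: raise_step_def dest: less_fun_upd_minus)

lemma raise_reach_le: "(raise_step u P)\<^sup>*\<^sup>* x y \<Longrightarrow> is_cfg x \<Longrightarrow> is_cfg y \<and> x \<le> y"
  by (induction rule: rtranclp_induct) (auto dest: raise_step_le)

lemma raise_top_upper: "(raise_step u P)\<^sup>*\<^sup>* x y \<Longrightarrow> y \<le> raise_top u P x"
  for x :: "('v::finite) cfg"
  unfolding raise_top_def
  by (rule bigjoin_upper) (auto intro: finite_rtranclp_cfg dest: raise_step_le)

context
  fixes u :: "('v::finite) game" and P :: "real \<Rightarrow> bool"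
  assumes supermodular: "supermodular u"
    and P_upward: "\<And>a b. P a \<Longrightarrow> a \<le> b \<Longrightarrow> P b"
begin

text \<open>
  By supermodularity a raise that is profitable at \<open>w\<close> stays profitable above \<open>w\<close>, so the raises
  leading from \<open>x\<close> to \<open>y\<close> can be replayed above \<open>z\<close>.
\<close>

lemma raise_reach_sup:
  assumes "(raise_step u P)\<^sup>*\<^sup>* x y" "is_cfg x" "is_cfg z" "x \<le> z"
  shows "(raise_step u P)\<^sup>*\<^sup>* z (sup z y)"
  using assms(1)
proof (induction rule: rtranclp_induct)
  case base
  then show ?case using assms(4) by (simp add: sup_absorb1)
next
  case (step w w')
  obtain i where i: "w i = -1" "w' = w(i := 1)" "P (marginal_gain u i w)"
    using step.hyps(2) by (auto simp: raise_step_def)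
  have w: "is_cfg w"
    using raise_reach_le[OF step.hyps(1) assms(2)] by simp
  have zw: "is_cfg (sup z w)"
    using is_cfg_sup[OF assms(3) w] .
  have upd: "sup z w' = (sup z w)(i := 1)"
    using i is_cfg_cases[OF assms(3), of i] by (auto simp: fun_eq_iff sup_max)
  show ?case
  proof (cases "sup z w i = 1")
    case True
    then have "sup z w' = sup z w"
      using upd by (auto simp: fun_eq_iff)
    with step.IH show ?thesis by simp
  next
    case False
    then have "sup z w i = -1"
      using is_cfg_cases[OF zw, of i] by auto
    moreover have "P (marginal_gain u i (sup z w))"
      using P_upward[OF i(3) marginal_gain_mono[OF supermodular zw w sup_ge2]] .
    ultimately have "raise_step u P (sup z w) (sup z w')"
      using upd zw by (auto simp: raise_step_def)
    with step.IH show ?thesis by (meson rtranclp.rtrancl_into_rtrancl)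
  qed
qed

lemma raise_top_reach:
  assumes "is_cfg x"
  shows "(raise_step u P)\<^sup>*\<^sup>* x (raise_top u P x)"
proof -
  let ?S = "{y. (raise_step u P)\<^sup>*\<^sup>* x y}"
  have "bigjoin ?S \<in> ?S"
  proof (rule bigjoin_sup_closed)
    show "finite ?S"
      by (rule finite_rtranclp_cfg) (auto dest: raise_step_le)
    show "?S \<noteq> {}" by auto
    fix a b assume "a \<in> ?S" "b \<in> ?S"
    then have xa: "(raise_step u P)\<^sup>*\<^sup>* x a" and xb: "(raise_step u P)\<^sup>*\<^sup>* x b"
      by simp_all
    have "(raise_step u P)\<^sup>*\<^sup>* a (sup a b)"
      using raise_reach_sup[OF xb assms] raise_reach_le[OF xa assms] by blast
    with xa show "sup a b \<in> ?S" by simp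
  qed
  then show ?thesis by (simp add: raise_top_def)
qed

lemma raise_top_cfg: "is_cfg x \<Longrightarrow> is_cfg (raise_top u P x) \<and> x \<le> raise_top u P x"
  using raise_reach_le[OF raise_top_reach] by simp

lemma raise_top_stuck:
  assumes "is_cfg x" "raise_top u P x i = -1"
  shows "\<not> P (marginal_gain u i (raise_top u P x))"
proof
  let ?t = "raise_top u P x"
  assume "P (marginal_gain u i ?t)"
  then have "raise_step u P ?t (?t(i := 1))"
    using assms raise_top_cfg by (auto simp: raise_step_def)
  with raise_top_reach[OF assms(1)] have "?t(i := 1) \<le> ?t"
    by (auto intro: raise_top_upper)
  with assms(2) show False
    by (auto simp: le_fun_def dest: spec[of _ i])
qed

lemma raise_reach_below:
  assumes "(raise_step u P)\<^sup>*\<^sup>* x y" "x \<le> z" "is_cfg z"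
    and stuck: "\<And>i. z i = -1 \<Longrightarrow> \<not> P (marginal_gain u i z)"
  shows "y \<le> z"
  using assms(1)
proof (induction rule: rtranclp_induct)
  case base
  show ?case using assms(2) .
next
  case (step w w')
  obtain i where i: "is_cfg w" "w i = -1" "w' = w(i := 1)" "P (marginal_gain u i w)"
    using step.hyps(2) by (auto simp: raise_step_def)
  have "P (marginal_gain u i z)"
    using P_upward[OF i(4) marginal_gain_mono[OF supermodular assms(3) i(1) step.IH]] .
  then have "z i = 1"
    using stuck is_cfg_cases[OF assms(3), of i] by auto
  with step.IH i(3) show ?case
    by (auto simp: le_fun_def)
qed

lemma raise_top_least:
  "is_cfg x \<Longrightarrow> x \<le> z \<Longrightarrow> is_cfg z \<Longrightarrow> (\<And>i. z i = -1 \<Longrightarrow> \<not> P (marginal_gain u i z))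
    \<Longrightarrow> raise_top u P x \<le> z"
  by (rule raise_reach_below[OF raise_top_reach])

lemma raise_top_mono:
  assumes "is_cfg x" "is_cfg y" "x \<le> y"
  shows "raise_top u P x \<le> raise_top u P y"
proof -
  have "(raise_step u P)\<^sup>*\<^sup>* y (sup y (raise_top u P x))"
    using raise_reach_sup[OF raise_top_reach[OF assms(1)] assms] .
  then have "sup y (raise_top u P x) \<le> raise_top u P y"
    by (rule raise_top_upper)
  then show ?thesis by simp
qed

lemma raise_reach_down_stable:
  assumes "(raise_step u P)\<^sup>*\<^sup>* x y" "\<And>d. P d \<Longrightarrow> 0 \<le> d" "down_stable u x"
  shows "down_stable u y"
  using assms(1)
proof (induction rule: rtranclp_induct)
  case base
  show ?case using assms(3) .
next
  case (step w w')
  obtain i where i: "is_cfg w" "w i = -1" "w' = w(i := 1)" "P (marginal_gain u i w)"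
    using step.hyps(2) by (auto simp: raise_step_def)
  have w': "is_cfg w'" "w \<le> w'"
    using raise_step_le[OF step.hyps(2)] by auto
  show ?case
    unfolding down_stable_def
  proof (intro allI impI)
    fix j
    assume "w' j = 1"
    show "0 \<le> marginal_gain u j w'"
    proof (cases "j = i")
      case True
      then show ?thesis using i assms(2) by simp
    next
      case False
      with \<open>w' j = 1\<close> i(3) step.IH have "0 \<le> marginal_gain u j w"
        by (simp add: down_stable_def)
      also have "\<dots> \<le> marginal_gain u j w'"
        using marginal_gain_mono[OF supermodular w'(1) i(1) w'(2)] .
      finally show ?thesis .
    qed
  qed
qed

lemma raise_top_antimono:
  assumes "R\<^sup>*\<^sup>* x y"
    and R: "\<And>a b. R a b \<Longrightarrow> raise_step u P a b \<or> is_cfg a \<and> is_cfg b \<and> b \<le> a"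
  shows "raise_top u P y \<le> raise_top u P x"
  using assms(1)
proof (induction rule: rtranclp_induct)
  case base
  show ?case by simp
next
  case (step w w')
  have "raise_top u P w' \<le> raise_top u P w"
    using R[OF step.hyps(2)]
  proof
    assume raise: "raise_step u P w w'"
    then have "(raise_step u P)\<^sup>*\<^sup>* w (raise_top u P w')"
      using raise_top_reach raise_step_le by (blast intro: converse_rtranclp_into_rtranclp)
    then show ?thesis by (rule raise_top_upper)
  next
    assume "is_cfg w \<and> is_cfg w' \<and> w' \<le> w"
    then show ?thesis using raise_top_mono by blast
  qed
  with step.IH show ?case by simp
qed

end

section \<open>The upward maps\<close>

lemma I_step_monotone_eq: "(\<lambda>x y. I_step u x y \<and> x < y) = raise_step u (\<lambda>d. 0 < d)"
proof (intro ext)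
  fix x y
  have "I_step u x y \<and> x < y \<longleftrightarrow> (\<exists>i. (adm_step i x y \<and> x < y) \<and> u i x < u i y)"
    by (auto simp: I_step_def)
  then show "I_step u x y \<and> x < y \<longleftrightarrow> raise_step u (\<lambda>d. 0 < d) x y"
    by (auto simp: adm_step_upward_iff raise_step_def marginal_gain_at_minus)
qed

lemma BR_step_monotone_eq: "(\<lambda>x y. BR_step u x y \<and> x < y) = raise_step u (\<lambda>d. 0 \<le> d)"
proof (intro ext)
  fix x y
  have "BR_step u x y \<and> x < y \<longleftrightarrow> (\<exists>i. (adm_step i x y \<and> x < y) \<and> u i x \<le> u i y)"
    by (auto simp: BR_step_def)
  then show "BR_step u x y \<and> x < y \<longleftrightarrow> raise_step u (\<lambda>d. 0 \<le> d) x y"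
    by (auto simp: adm_step_upward_iff raise_step_def marginal_gain_at_minus)
qed

lemma I_step_raise_or_lower:
  assumes "I_step u x y"
  shows "raise_step u (\<lambda>d. 0 < d) x y \<or> is_cfg x \<and> is_cfg y \<and> y \<le> x"
proof -
  obtain i where "adm_step i x y"
    using assms by (auto simp: I_step_def)
  then have "is_cfg x \<and> is_cfg y" "x < y \<or> y < x"
    by (simp_all add: adm_step_less) (simp add: adm_step_def)
  with assms show ?thesis
    by (auto simp: I_step_monotone_eq[symmetric])
qed

lemma BR_step_raise_or_lower:
  assumes "BR_step u x y"
  shows "raise_step u (\<lambda>d. 0 \<le> d) x y \<or> is_cfg x \<and> is_cfg y \<and> y \<le> x"
proof -
  obtain i where "adm_step i x y"
    using assms by (auto simp: BR_step_def)
  then have "is_cfg x \<and> is_cfg y" "x < y \<or> y < x"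
    by (simp_all add: adm_step_less) (simp add: adm_step_def)
  with assms show ?thesis
    by (auto simp: BR_step_monotone_eq[symmetric])
qed

lemma f_plus_eq_raise_top: "f_plus u = raise_top u (\<lambda>d. 0 < d)"
  unfolding f_plus_def raise_top_def I_reach_mono_def I_step_monotone_eq ..

lemma g_plus_eq_raise_top: "g_plus u = raise_top u (\<lambda>d. 0 \<le> d)"
  unfolding g_plus_def raise_top_def BR_reach_mono_def BR_step_monotone_eq ..

context
  fixes u :: "('v::finite) game"
  assumes supermodular: "supermodular u"
begin

lemma f_plus_ge: "is_cfg x \<Longrightarrow> is_cfg (f_plus u x) \<and> x \<le> f_plus u x"
  unfolding f_plus_eq_raise_top using supermodular by (rule raise_top_cfg) auto

lemma I_reach_f_plus: "is_cfg x \<Longrightarrow> I_reach u x (f_plus u x)"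
  unfolding f_plus_eq_raise_top I_reach_def
  by (rule mono_rtranclp[rule_format, OF _ raise_top_reach[OF supermodular]])
    (auto simp: I_step_monotone_eq[symmetric])

lemma up_stable_f_plus: "is_cfg x \<Longrightarrow> up_stable u (f_plus u x)"
  unfolding f_plus_eq_raise_top up_stable_def
  using raise_top_stuck[OF supermodular, of "\<lambda>d. 0 < d"] by force

lemma f_plus_equilibrium:
  assumes "is_cfg x" "down_stable u x"
  shows "f_plus u x \<in> equilibria u"
proof -
  have "down_stable u (raise_top u (\<lambda>d. 0 < d) x)"
    by (rule raise_reach_down_stable[OF supermodular _ raise_top_reach[OF supermodular]])
      (use assms in auto)
  then show ?thesis
    using assms f_plus_ge up_stable_f_plus by (simp add: equilibria_iff f_plus_eq_raise_top)
qed

lemma f_plus_le_equilibrium: "is_cfg x \<Longrightarrow> z \<in> equilibria u \<Longrightarrow> x \<le> z \<Longrightarrow> f_plus u x \<le> z"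
  unfolding f_plus_eq_raise_top
  by (rule raise_top_least[OF supermodular]) (auto simp: equilibria_iff up_stable_def)

lemma I_reach_f_plus_antimono: "I_reach u x y \<Longrightarrow> f_plus u y \<le> f_plus u x"
  unfolding f_plus_eq_raise_top I_reach_def
  by (rule raise_top_antimono[OF supermodular _ _ I_step_raise_or_lower]) auto

lemma I_reach_le_f_plus:
  assumes "is_cfg x" "I_reach u x z"
  shows "z \<le> f_plus u x"
proof -
  have "is_cfg z"
    using rtranclp_is_cfg[OF assms(2)[unfolded I_reach_def] _ assms(1)]
    by (auto simp: I_step_def adm_step_def)
  then have "z \<le> f_plus u z"
    using f_plus_ge by blast
  also have "\<dots> \<le> f_plus u x"
    using I_reach_f_plus_antimono[OF assms(2)] .
  finally show ?thesis .
qed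

lemma g_plus_ge: "is_cfg x \<Longrightarrow> is_cfg (g_plus u x) \<and> x \<le> g_plus u x"
  unfolding g_plus_eq_raise_top using supermodular by (rule raise_top_cfg) auto

lemma BR_reach_g_plus: "is_cfg x \<Longrightarrow> BR_reach u x (g_plus u x)"
  unfolding g_plus_eq_raise_top BR_reach_def
  by (rule mono_rtranclp[rule_format, OF _ raise_top_reach[OF supermodular]])
    (auto simp: BR_step_monotone_eq[symmetric])

lemma up_stable_g_plus: "is_cfg x \<Longrightarrow> up_stable u (g_plus u x)"
  unfolding g_plus_eq_raise_top up_stable_def
  using raise_top_stuck[OF supermodular, of "\<lambda>d. 0 \<le> d"] by force

lemma g_plus_equilibrium:
  assumes "x \<in> equilibria u"
  shows "g_plus u x \<in> equilibria u"
proof -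
  have "down_stable u (raise_top u (\<lambda>d. 0 \<le> d) x)"
    by (rule raise_reach_down_stable[OF supermodular _ raise_top_reach[OF supermodular]])
      (use assms in \<open>auto simp: equilibria_iff\<close>)
  then show ?thesis
    using assms g_plus_ge up_stable_g_plus by (simp add: equilibria_iff g_plus_eq_raise_top)
qed

lemma BR_reach_g_plus_antimono: "BR_reach u x y \<Longrightarrow> g_plus u y \<le> g_plus u x"
  unfolding g_plus_eq_raise_top BR_reach_def
  by (rule raise_top_antimono[OF supermodular _ _ BR_step_raise_or_lower]) auto

lemma BR_reach_le_g_plus:
  assumes "is_cfg x" "BR_reach u x z"
  shows "z \<le> g_plus u x"
proof -
  have "is_cfg z"
    using rtranclp_is_cfg[OF assms(2)[unfolded BR_reach_def] _ assms(1)]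
    by (auto simp: BR_step_def adm_step_def)
  then have "z \<le> g_plus u z"
    using g_plus_ge by blast
  also have "\<dots> \<le> g_plus u x"
    using BR_reach_g_plus_antimono[OF assms(2)] .
  finally show ?thesis .
qed

end

section \<open>Duality\<close>

text \<open>
  Flipping all actions gives again a supermodular game, in which raising and lowering are
  exchanged; every statement about \<open>f_minus\<close> and \<open>g_minus\<close> is the dual of one about
  \<open>f_plus\<close> and \<open>g_plus\<close>.
\<close>

definition dual_game :: "'v game \<Rightarrow> 'v game" where
  "dual_game u i x = u i (- x)"

lemma dual_game_dual_game [simp]: "dual_game (dual_game u) = u"
  by (simp add: dual_game_def fun_eq_iff)

lemma uminus_fun_upd: "- (x(i := a)) = (- x)(i := - a)" for x :: "'v cfg"
  by (simp add: fun_eq_iff)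

lemma marginal_gain_dual_game [simp]: "marginal_gain (dual_game u) i x = - marginal_gain u i (- x)"
  by (simp add: marginal_gain_def dual_game_def uminus_fun_upd)

lemma supermodular_dual_game:
  fixes u :: "'v game"
  assumes "supermodular u"
  shows "supermodular (dual_game u)"
  unfolding supermodular_iff
proof (intro allI impI)
  fix i :: 'v and x y :: "'v cfg"
  assume "is_cfg x \<and> is_cfg y \<and> (\<forall>j. j \<noteq> i \<longrightarrow> y j \<le> x j)"
  with assms have "marginal_gain u i (- x) \<le> marginal_gain u i (- y)"
    by (simp add: supermodular_iff)
  then show "marginal_gain (dual_game u) i y \<le> marginal_gain (dual_game u) i x"
    by simp
qed

lemma up_stable_dual_game [simp]: "up_stable (dual_game u) x \<longleftrightarrow> down_stable u (- x)"
  by (auto simp: up_stable_def down_stable_def minus_equation_iff)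

lemma down_stable_dual_game [simp]: "down_stable (dual_game u) x \<longleftrightarrow> up_stable u (- x)"
  by (auto simp: up_stable_def down_stable_def minus_equation_iff)

lemma equilibria_dual_game [simp]: "x \<in> equilibria (dual_game u) \<longleftrightarrow> - x \<in> equilibria u"
  by (auto simp: equilibria_iff)

lemma adm_step_uminus [simp]: "adm_step i (- x) (- y) \<longleftrightarrow> adm_step i x y"
  by (auto simp: adm_step_def)

lemma I_step_dual_game: "I_step (dual_game u) = (\<lambda>x y. I_step u (- x) (- y))"
  by (simp add: fun_eq_iff I_step_def dual_game_def)

lemma BR_step_dual_game: "BR_step (dual_game u) = (\<lambda>x y. BR_step u (- x) (- y))"
  by (simp add: fun_eq_iff BR_step_def dual_game_def)

lemma rtranclp_uminus_iff:
  "(\<lambda>a b. R (- a) (- b))\<^sup>*\<^sup>* x y \<longleftrightarrow> R\<^sup>*\<^sup>* (- x) (- (y :: 'a :: group_add))"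
proof
  show "(\<lambda>a b. R (- a) (- b))\<^sup>*\<^sup>* x y \<Longrightarrow> R\<^sup>*\<^sup>* (- x) (- y)"
    by (induction rule: rtranclp_induct) (auto intro: rtranclp.rtrancl_into_rtrancl)
  have "(\<lambda>a b. R (- a) (- b))\<^sup>*\<^sup>* (- a) (- b)" if "R\<^sup>*\<^sup>* a b" for a b
    using that by (induction rule: rtranclp_induct) (auto intro: rtranclp.rtrancl_into_rtrancl)
  from this[of "- x" "- y"] show "R\<^sup>*\<^sup>* (- x) (- y) \<Longrightarrow> (\<lambda>a b. R (- a) (- b))\<^sup>*\<^sup>* x y"
    by simp
qed

lemma I_reach_dual_game [simp]: "I_reach (dual_game u) x y \<longleftrightarrow> I_reach u (- x) (- y)"
  unfolding I_reach_def I_step_dual_game by (rule rtranclp_uminus_iff)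

lemma BR_reach_dual_game [simp]: "BR_reach (dual_game u) x y \<longleftrightarrow> BR_reach u (- x) (- y)"
  unfolding BR_reach_def BR_step_dual_game by (rule rtranclp_uminus_iff)

lemma I_reach_anti_dual_game: "I_reach_anti (dual_game u) x y \<longleftrightarrow> I_reach_mono u (- x) (- y)"
proof -
  have "(\<lambda>a b. I_step (dual_game u) a b \<and> b < a) = (\<lambda>a b. I_step u (- a) (- b) \<and> - a < - b)"
    by (simp add: I_step_dual_game)
  then show ?thesis
    unfolding I_reach_anti_def I_reach_mono_def
    by (simp only: rtranclp_uminus_iff[of "\<lambda>a b. I_step u a b \<and> a < b"])
qed

lemma BR_reach_anti_dual_game: "BR_reach_anti (dual_game u) x y \<longleftrightarrow> BR_reach_mono u (- x) (- y)"
proof -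
  have "(\<lambda>a b. BR_step (dual_game u) a b \<and> b < a) = (\<lambda>a b. BR_step u (- a) (- b) \<and> - a < - b)"
    by (simp add: BR_step_dual_game)
  then show ?thesis
    unfolding BR_reach_anti_def BR_reach_mono_def
    by (simp only: rtranclp_uminus_iff[of "\<lambda>a b. BR_step u a b \<and> a < b"])
qed

lemma f_minus_dual_game [simp]: "f_minus (dual_game u) x = - f_plus u (- x)"
  for u :: "('v::finite) game"
proof -
  let ?S = "{y. I_reach_mono u (- x) y}"
  have "{y. I_reach_anti (dual_game u) x y} = uminus ` ?S"
    by (auto simp: I_reach_anti_dual_game image_iff) (metis minus_minus)
  moreover have "finite ?S" "?S \<noteq> {}"
    unfolding I_reach_mono_def
    by (auto intro: finite_rtranclp_cfg simp: I_step_def adm_step_def)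
  ultimately show ?thesis
    by (simp add: f_minus_def f_plus_def bigmeet_image_uminus)
qed

lemma g_minus_dual_game [simp]: "g_minus (dual_game u) x = - g_plus u (- x)"
  for u :: "('v::finite) game"
proof -
  let ?S = "{y. BR_reach_mono u (- x) y}"
  have "{y. BR_reach_anti (dual_game u) x y} = uminus ` ?S"
    by (auto simp: BR_reach_anti_dual_game image_iff) (metis minus_minus)
  moreover have "finite ?S" "?S \<noteq> {}"
    unfolding BR_reach_mono_def
    by (auto intro: finite_rtranclp_cfg simp: BR_step_def adm_step_def)
  ultimately show ?thesis
    by (simp add: g_minus_def g_plus_def bigmeet_image_uminus)
qed

lemma f_plus_dual_game [simp]: "f_plus (dual_game u) x = - f_minus u (- x)"
  for u :: "('v::finite) game"
  using f_minus_dual_game[of "dual_game u" "- x"] by simp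

lemma g_plus_dual_game [simp]: "g_plus (dual_game u) x = - g_minus u (- x)"
  for u :: "('v::finite) game"
  using g_minus_dual_game[of "dual_game u" "- x"] by simp

lemma is_greatest_iff_is_least_uminus: "is_greatest S z \<longleftrightarrow> is_least {w. - w \<in> S} (- z)"
  for z :: "'v cfg"
proof -
  have "(\<forall>w. - w \<in> S \<longrightarrow> - w \<le> z) \<longleftrightarrow> (\<forall>w\<in>S. w \<le> z)"
    by (metis minus_minus)
  then show ?thesis
    by (simp add: is_greatest_def is_least_def minus_le_iff)
qed

section \<open>Extremal equilibria\<close>

text \<open>Unlike \<open>bigjoin\<close> and \<open>bigmeet\<close>, these are meaningful for the empty set.\<close>

definition cfg_join :: "'v cfg set \<Rightarrow> 'v cfg" where
  "cfg_join A = (\<lambda>i. if \<exists>a\<in>A. a i = 1 then 1 else -1)"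

definition cfg_meet :: "'v cfg set \<Rightarrow> 'v cfg" where
  "cfg_meet A = (\<lambda>i. if \<exists>a\<in>A. a i = -1 then -1 else 1)"

lemma is_cfg_cfg_join: "is_cfg (cfg_join A)"
  by (simp add: cfg_join_def is_cfg_def)

lemma cfg_meet_eq_uminus_cfg_join: "cfg_meet A = - cfg_join (uminus ` A)"
  by (auto simp: cfg_meet_def cfg_join_def fun_eq_iff minus_equation_iff)

lemma cfg_join_le_iff:
  assumes "\<And>a. a \<in> A \<Longrightarrow> is_cfg a" "is_cfg t"
  shows "cfg_join A \<le> t \<longleftrightarrow> (\<forall>a\<in>A. a \<le> t)"
proof -
  have "a \<le> cfg_join A" if "a \<in> A" for a
  proof (rule le_funI)
    fix i
    show "a i \<le> cfg_join A i"
      using that is_cfg_cases[OF assms(1)[OF that], of i] by (auto simp: cfg_join_def)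
  qed
  moreover have "cfg_join A \<le> t" if "\<forall>a\<in>A. a \<le> t"
  proof (rule le_funI)
    fix i
    show "cfg_join A i \<le> t i"
    proof (cases "\<exists>a\<in>A. a i = 1")
      case True
      then obtain a where "a \<in> A" "a i = 1"
        by blast
      with that have "1 \<le> t i"
        by (metis le_funD)
      then show ?thesis
        by (simp add: cfg_join_def)
    next
      case False
      with is_cfg_bounds[OF assms(2)] show ?thesis
        by (auto simp: cfg_join_def le_fun_def)
    qed
  qed
  ultimately show ?thesis
    by (meson order_trans)
qed

lemma cfg_join_empty: "cfg_join {} = (\<lambda>_. -1)"
  by (simp add: cfg_join_def)

lemma cfg_meet_empty: "cfg_meet {} = (\<lambda>_. 1)"
  by (simp add: cfg_meet_def)

lemma cfg_join_pair: "is_cfg x \<Longrightarrow> is_cfg y \<Longrightarrow> cfg_join {x, y} = sup x y"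
proof (rule ext)
  fix i
  assume "is_cfg x" "is_cfg y"
  then show "cfg_join {x, y} i = sup x y i"
    using is_cfg_cases[of x i] is_cfg_cases[of y i] by (auto simp: cfg_join_def sup_max)
qed

lemma cfg_meet_pair: "is_cfg x \<Longrightarrow> is_cfg y \<Longrightarrow> cfg_meet {x, y} = inf x y"
proof (rule ext)
  fix i
  assume "is_cfg x" "is_cfg y"
  then show "cfg_meet {x, y} i = inf x y i"
    using is_cfg_cases[of x i] is_cfg_cases[of y i] by (auto simp: cfg_meet_def inf_min)
qed

lemma down_stable_cfg_join:
  assumes "supermodular u" "\<And>a. a \<in> A \<Longrightarrow> is_cfg a \<and> down_stable u a"
  shows "down_stable u (cfg_join A)"
  unfolding down_stable_def
proof (intro allI impI)
  fix i
  assume "cfg_join A i = 1"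
  then obtain a where a: "a \<in> A" "a i = 1"
    by (auto simp: cfg_join_def split: if_splits)
  have "a \<le> cfg_join A"
    using cfg_join_le_iff[OF _ is_cfg_cfg_join, of A] assms(2) a(1) by blast
  then have "marginal_gain u i a \<le> marginal_gain u i (cfg_join A)"
    using marginal_gain_mono[OF assms(1) is_cfg_cfg_join] assms(2)[OF a(1)] by blast
  moreover have "0 \<le> marginal_gain u i a"
    using assms(2)[OF a(1)] a(2) by (simp add: down_stable_def)
  ultimately show "0 \<le> marginal_gain u i (cfg_join A)"
    by simp
qed

context
  fixes u :: "('v::finite) game"
  assumes supermodular: "supermodular u"
begin

lemma f_minus_le: "is_cfg x \<Longrightarrow> is_cfg (f_minus u x) \<and> f_minus u x \<le> x"
  using f_plus_ge[OF supermodular_dual_game[OF supermodular], of "- x"] by simp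

lemma I_reach_f_minus: "is_cfg x \<Longrightarrow> I_reach u x (f_minus u x)"
  using I_reach_f_plus[OF supermodular_dual_game[OF supermodular], of "- x"] by simp

lemma down_stable_f_minus: "is_cfg x \<Longrightarrow> down_stable u (f_minus u x)"
  using up_stable_f_plus[OF supermodular_dual_game[OF supermodular], of "- x"] by simp

lemma I_reach_f_minus_le: "is_cfg x \<Longrightarrow> I_reach u x z \<Longrightarrow> f_minus u x \<le> z"
  using I_reach_le_f_plus[OF supermodular_dual_game[OF supermodular], of "- x" "- z"] by simp

lemma g_minus_le: "is_cfg x \<Longrightarrow> is_cfg (g_minus u x) \<and> g_minus u x \<le> x"
  using g_plus_ge[OF supermodular_dual_game[OF supermodular], of "- x"] by simp

lemma BR_reach_g_minus: "is_cfg x \<Longrightarrow> BR_reach u x (g_minus u x)"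
  using BR_reach_g_plus[OF supermodular_dual_game[OF supermodular], of "- x"] by simp

lemma down_stable_g_minus: "is_cfg x \<Longrightarrow> down_stable u (g_minus u x)"
  using up_stable_g_plus[OF supermodular_dual_game[OF supermodular], of "- x"] by simp

lemma g_minus_equilibrium: "x \<in> equilibria u \<Longrightarrow> g_minus u x \<in> equilibria u"
  using g_plus_equilibrium[OF supermodular_dual_game[OF supermodular], of "- x"] by simp

lemma BR_reach_g_minus_le: "is_cfg x \<Longrightarrow> BR_reach u x z \<Longrightarrow> g_minus u x \<le> z"
  using BR_reach_le_g_plus[OF supermodular_dual_game[OF supermodular], of "- x" "- z"] by simp

lemma f_plus_f_minus_least:
  assumes "is_cfg x"
  shows "is_least {z \<in> equilibria u. I_reach u x z} (f_plus u (f_minus u x))"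
proof -
  have m: "is_cfg (f_minus u x)"
    using f_minus_le[OF assms] by simp
  have "f_plus u (f_minus u x) \<in> equilibria u"
    by (rule f_plus_equilibrium[OF supermodular m down_stable_f_minus[OF assms]])
  moreover have "I_reach u x (f_plus u (f_minus u x))"
    by (rule I_reach_trans[OF I_reach_f_minus[OF assms] I_reach_f_plus[OF supermodular m]])
  moreover have "f_plus u (f_minus u x) \<le> z" if "z \<in> equilibria u" "I_reach u x z" for z
    by (rule f_plus_le_equilibrium[OF supermodular m that(1) I_reach_f_minus_le[OF assms that(2)]])
  ultimately show ?thesis
    by (simp add: is_least_def)
qed

lemma f_plus_g_minus_least:
  assumes "is_cfg x"
  shows "is_least {z \<in> equilibria u. BR_reach u x z} (f_plus u (g_minus u x))"
proof -
  have m: "is_cfg (g_minus u x)"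
    using g_minus_le[OF assms] by simp
  have "f_plus u (g_minus u x) \<in> equilibria u"
    by (rule f_plus_equilibrium[OF supermodular m down_stable_g_minus[OF assms]])
  moreover have "BR_reach u x (f_plus u (g_minus u x))"
    using BR_reach_trans[OF BR_reach_g_minus[OF assms]
        I_reach_imp_BR_reach[OF I_reach_f_plus[OF supermodular m]]] .
  moreover have "f_plus u (g_minus u x) \<le> z" if "z \<in> equilibria u" "BR_reach u x z" for z
    by (rule f_plus_le_equilibrium[OF supermodular m that(1) BR_reach_g_minus_le[OF assms that(2)]])
  ultimately show ?thesis
    by (simp add: is_least_def)
qed

lemma g_minus_least:
  assumes "x \<in> equilibria u"
  shows "is_least {z \<in> equilibria u. BR_reach u x z} (g_minus u x)"
proof -
  have "is_cfg x"
    using assms by (simp add: equilibria_iff)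
  then show ?thesis
    using g_minus_equilibrium[OF assms] BR_reach_g_minus BR_reach_g_minus_le
    by (simp add: is_least_def)
qed

lemma f_plus_cfg_join_least:
  assumes "A \<subseteq> equilibria u"
  shows "is_least {t \<in> equilibria u. \<forall>a\<in>A. a \<le> t} (f_plus u (cfg_join A))"
proof -
  have A: "\<And>a. a \<in> A \<Longrightarrow> is_cfg a \<and> down_stable u a"
    using assms by (auto simp: equilibria_iff)
  have eq: "f_plus u (cfg_join A) \<in> equilibria u"
    using f_plus_equilibrium[OF supermodular is_cfg_cfg_join down_stable_cfg_join[OF supermodular A]] .
  have "\<forall>a\<in>A. a \<le> f_plus u (cfg_join A)"
    using cfg_join_le_iff[of A "f_plus u (cfg_join A)"] A f_plus_ge[OF supermodular is_cfg_cfg_join]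
    by auto
  moreover have "f_plus u (cfg_join A) \<le> t" if "t \<in> equilibria u" "\<forall>a\<in>A. a \<le> t" for t
    using f_plus_le_equilibrium[OF supermodular is_cfg_cfg_join that(1)] cfg_join_le_iff[of A t] A that
    by (auto simp: equilibria_iff)
  ultimately show ?thesis
    using eq by (simp add: is_least_def)
qed

end

context
  fixes u :: "('v::finite) game"
  assumes supermodular: "supermodular u"
begin

lemma f_minus_f_plus_greatest:
  "is_cfg x \<Longrightarrow> is_greatest {z \<in> equilibria u. I_reach u x z} (f_minus u (f_plus u x))"
  unfolding is_greatest_iff_is_least_uminus
  using f_plus_f_minus_least[OF supermodular_dual_game[OF supermodular], of "- x"] by simp

lemma f_minus_g_plus_greatest:
  "is_cfg x \<Longrightarrow> is_greatest {z \<in> equilibria u. BR_reach u x z} (f_minus u (g_plus u x))"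
  unfolding is_greatest_iff_is_least_uminus
  using f_plus_g_minus_least[OF supermodular_dual_game[OF supermodular], of "- x"] by simp

lemma g_plus_greatest:
  "x \<in> equilibria u \<Longrightarrow> is_greatest {z \<in> equilibria u. BR_reach u x z} (g_plus u x)"
  unfolding is_greatest_iff_is_least_uminus
  using g_minus_least[OF supermodular_dual_game[OF supermodular], of "- x"] by simp

lemma f_minus_cfg_meet_greatest:
  assumes "A \<subseteq> equilibria u"
  shows "is_greatest {t \<in> equilibria u. \<forall>a\<in>A. t \<le> a} (f_minus u (cfg_meet A))"
  unfolding is_greatest_iff_is_least_uminus cfg_meet_eq_uminus_cfg_join
  using f_plus_cfg_join_least[OF supermodular_dual_game[OF supermodular], of "uminus ` A"] assms
  by (simp add: image_subset_iff subset_eq minus_le_iff)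

lemma least_equilibrium: "is_least (equilibria u) (f_plus u (\<lambda>_. -1))"
  using f_plus_cfg_join_least[OF supermodular, of "{}"] by (simp add: cfg_join_empty)

lemma greatest_equilibrium: "is_greatest (equilibria u) (f_minus u (\<lambda>_. 1))"
  using f_minus_cfg_meet_greatest[of "{}"] by (simp add: cfg_meet_empty)

lemma equilibria_nonempty: "equilibria u \<noteq> {}"
  using least_equilibrium by (auto simp: is_least_def)

lemma equilibria_complete_lattice: "complete_lattice_on (equilibria u)"
  unfolding complete_lattice_on_def
  using f_plus_cfg_join_least[OF supermodular] f_minus_cfg_meet_greatest by blast

lemma f_plus_sup_least:
  "x \<in> equilibria u \<Longrightarrow> y \<in> equilibria u
    \<Longrightarrow> is_least {z \<in> equilibria u. x \<le> z \<and> y \<le> z} (f_plus u (sup x y))"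
  using f_plus_cfg_join_least[OF supermodular, of "{x, y}"]
  by (simp add: cfg_join_pair equilibria_iff)

lemma f_minus_inf_greatest:
  "x \<in> equilibria u \<Longrightarrow> y \<in> equilibria u
    \<Longrightarrow> is_greatest {z \<in> equilibria u. z \<le> x \<and> z \<le> y} (f_minus u (inf x y))"
  using f_minus_cfg_meet_greatest[of "{x, y}"]
  by (simp add: cfg_meet_pair equilibria_iff)

lemma g_minus_bottom: "g_minus u (\<lambda>_. -1) = (\<lambda>_. -1)"
proof -
  have "is_cfg (g_minus u (\<lambda>_. -1)) \<and> g_minus u (\<lambda>_. -1) \<le> (\<lambda>_. -1)"
    by (rule g_minus_le[OF supermodular]) (simp add: is_cfg_def)
  then show ?thesis
    using is_cfg_bounds by (blast intro: order.antisym)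
qed

lemma g_plus_top: "g_plus u (\<lambda>_. 1) = (\<lambda>_. 1)"
proof -
  have "is_cfg (g_plus u (\<lambda>_. 1)) \<and> (\<lambda>_. 1) \<le> g_plus u (\<lambda>_. 1)"
    by (rule g_plus_ge[OF supermodular]) (simp add: is_cfg_def)
  then show ?thesis
    using is_cfg_bounds by (blast intro: order.antisym)
qed

lemma equilibria_globally_I_stable: "globally_stable (I_reach u) (equilibria u)"
  unfolding globally_stable_def globally_reachable_def invariant_def
  using f_minus_f_plus_greatest I_reach_from_equilibrium by (fastforce simp: is_greatest_def)

lemma unique_equilibrium_globally_BR_stable:
  assumes "f_plus u (\<lambda>_. -1) = xs" "f_minus u (\<lambda>_. 1) = xs"
  shows "equilibria u = {xs} \<and> globally_stable (BR_reach u) (equilibria u)"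
proof -
  have E: "equilibria u = {xs}"
    using least_equilibrium greatest_equilibrium assms
    by (auto simp: is_least_def is_greatest_def intro: order.antisym)
  then have xs: "xs \<in> equilibria u" "is_cfg xs"
    by (auto simp: equilibria_iff)
  have "z = xs" if "BR_reach u xs z" for z
  proof (rule order.antisym)
    have "g_plus u xs = xs"
      using g_plus_equilibrium[OF supermodular xs(1)] E by simp
    then show "z \<le> xs"
      using BR_reach_le_g_plus[OF supermodular xs(2) that] by simp
    have "g_minus u xs = xs"
      using g_minus_equilibrium[OF supermodular xs(1)] E by simp
    then show "xs \<le> z"
      using BR_reach_g_minus_le[OF supermodular xs(2) that] by simp
  qed
  moreover have "\<exists>y \<in> equilibria u. BR_reach u x y" if "is_cfg x" for x
    using f_minus_g_plus_greatest[OF that] by (auto simp: is_greatest_def)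
  ultimately show ?thesis
    using E by (simp add: globally_stable_def globally_reachable_def invariant_def)
qed

end

theorem proposition2:
  fixes u :: "('v::finite) game"
  assumes "supermodular u"
  shows
   "(\<forall>x. is_cfg x \<longrightarrow>
       ((is_greatest {z \<in> equilibria u. I_reach u x z} (f_minus u (f_plus u x))
         \<and> is_least {z \<in> equilibria u. I_reach u x z} (f_plus u (f_minus u x)))
      \<and> (is_greatest {z \<in> equilibria u. BR_reach u x z} (f_minus u (g_plus u x))
         \<and> is_least {z \<in> equilibria u. BR_reach u x z} (f_plus u (g_minus u x)))
      \<and> (x \<in> equilibria u \<longrightarrow>
           is_greatest {z \<in> equilibria u. BR_reach u x z} (g_plus u x)
         \<and> is_least {z \<in> equilibria u. BR_reach u x z} (g_minus u x))))
    \<and> (equilibria u \<noteq> {} \<and> complete_lattice_on (equilibria u)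
       \<and> globally_stable (I_reach u) (equilibria u))
    \<and> (f_plus u (g_minus u (\<lambda>_. -1)) = f_plus u (\<lambda>_. -1)
       \<and> is_least (equilibria u) (f_plus u (\<lambda>_. -1))
       \<and> f_minus u (g_plus u (\<lambda>_. 1)) = f_minus u (\<lambda>_. 1)
       \<and> is_greatest (equilibria u) (f_minus u (\<lambda>_. 1)))
    \<and> (\<forall>x \<in> equilibria u. \<forall>y \<in> equilibria u.
         is_least {z \<in> equilibria u. x \<le> z \<and> y \<le> z} (f_plus u (sup x y))
       \<and> is_greatest {z \<in> equilibria u. z \<le> x \<and> z \<le> y} (f_minus u (inf x y)))
    \<and> (\<forall>xs. f_plus u (\<lambda>_. -1) = xs \<and> f_minus u (\<lambda>_. 1) = xs \<longrightarrow>
         equilibria u = {xs} \<and> globally_stable (BR_reach u) (equilibria u))"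
  using assms
  by (simp add: f_minus_f_plus_greatest f_plus_f_minus_least f_minus_g_plus_greatest
      f_plus_g_minus_least g_plus_greatest g_minus_least equilibria_nonempty
      equilibria_complete_lattice equilibria_globally_I_stable g_minus_bottom g_plus_top
      least_equilibrium greatest_equilibrium f_plus_sup_least f_minus_inf_greatest)
    (metis assms unique_equilibrium_globally_BR_stable)

end
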